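(* Let $\succ=(\succ_s)_{s\in S}$ be a priority profile in which every $\succ_s$ is acyclic, and let $C:S\rightrightarrows I\times I$ be any correspondence. Then there exists a matching that is partially stable for $(\succ,C)$.
   Context: A binary relation $B$ on $X$ is asymmetric if $(x,y)\in B$ implies $(y,x)\notin B$; acyclic if for all $K\ge2$ and $x_0,\dots,x_K\in X$, [$(x_{k-1},x_k)\in B$ and $(x_k,x_{k-1})\notin B$ for all $k$] implies $(x_K,x_0)\notin B$. School choice setup: $I$ finite set of students ($|I|\ge 3$), $S$ finite set of schools; each student $i$ has a total order $P_i$ on $S\cup\{\emptyset\}$ ($sR_is'$ means $sP_is'$ or $s=s'$); each school $s$ has capacity $q_s\in\mathbb{Z}_{++}$ and an asymmetric priority relation $\succ_s$ on $I$. A matching $\mu$ assigns each $i$ to $\mu(i)\in S\cup\{\emptyset\}$ with $|\mu(s)|\le q_s$, $\mu(s)=\{i:\mu(i)=s\}$. $\mu$ is individually rational if $\mu(i)R_i\emptyset$ for all $i$, non-wasteful if $sP_i\mu(i)$ implies $|\mu(s)|=q_s$. $C(s)\subseteq I\times I$ lists pairs $(i,j)$ whose priority at $s$ may be violated. A matching $\mu$ is partially stable for $(\succ,C)$ if it is individually rational, non-wasteful, and for all $i,j\in I$ and $s\in S$: if $\mu(j)=s$, $sP_i\mu(i)$ and $(i,j)\in\succ_s$, then $(i,j)\in C(s)$. *)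

theory Defs
  imports Main
begin

text \<open>Schools have type 's, students type 'i. The outside option (being unmatched,
  written as the empty set in the paper) is None; school s is Some s.\<close>

definition outcomes :: "'s set \<Rightarrow> 's option set" where
  "outcomes S = insert None (Some ` S)"

definition acyclic_rel_on :: "'a set \<Rightarrow> ('a \<times> 'a) set \<Rightarrow> bool" where
  "acyclic_rel_on X B \<longleftrightarrow>
     (\<forall>K::nat. \<forall>x::nat \<Rightarrow> 'a. K \<ge> 2 \<longrightarrow> (\<forall>k\<le>K. x k \<in> X) \<longrightarrow>
        (\<forall>k\<in>{1..K}. (x (k - 1), x k) \<in> B \<and> (x k, x (k - 1)) \<notin> B) \<longrightarrow>
        (x K, x 0) \<notin> B)"

definition school_choice_problem ::
  "'i set \<Rightarrow> 's set \<Rightarrow> ('i \<Rightarrow> ('s option \<times> 's option) set) \<Rightarrow> ('s \<Rightarrow> nat)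
    \<Rightarrow> ('s \<Rightarrow> ('i \<times> 'i) set) \<Rightarrow> bool" where
  "school_choice_problem I S P q pr \<longleftrightarrow>
     finite I \<and> card I \<ge> 3 \<and> finite S \<and>
     (\<forall>i\<in>I. strict_linear_order_on (outcomes S) (P i) \<and> P i \<subseteq> outcomes S \<times> outcomes S) \<and>
     (\<forall>s\<in>S. q s > 0) \<and>
     (\<forall>s\<in>S. pr s \<subseteq> I \<times> I \<and> asym (pr s))"

definition assigned :: "'i set \<Rightarrow> ('i \<Rightarrow> 's option) \<Rightarrow> 's \<Rightarrow> 'i set" where
  "assigned I \<mu> s = {i \<in> I. \<mu> i = Some s}"

definition is_matching :: "'i set \<Rightarrow> 's set \<Rightarrow> ('s \<Rightarrow> nat) \<Rightarrow> ('i \<Rightarrow> 's option) \<Rightarrow> bool" where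
  "is_matching I S q \<mu> \<longleftrightarrow>
     (\<forall>i\<in>I. \<mu> i \<in> outcomes S) \<and> (\<forall>s\<in>S. card (assigned I \<mu> s) \<le> q s)"

definition individually_rational ::
  "'i set \<Rightarrow> ('i \<Rightarrow> ('s option \<times> 's option) set) \<Rightarrow> ('i \<Rightarrow> 's option) \<Rightarrow> bool" where
  "individually_rational I P \<mu> \<longleftrightarrow> (\<forall>i\<in>I. (\<mu> i, None) \<in> P i \<or> \<mu> i = None)"

definition non_wasteful ::
  "'i set \<Rightarrow> 's set \<Rightarrow> ('i \<Rightarrow> ('s option \<times> 's option) set) \<Rightarrow> ('s \<Rightarrow> nat)
     \<Rightarrow> ('i \<Rightarrow> 's option) \<Rightarrow> bool" where
  "non_wasteful I S P q \<mu> \<longleftrightarrow>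
     (\<forall>i\<in>I. \<forall>s\<in>S. (Some s, \<mu> i) \<in> P i \<longrightarrow> card (assigned I \<mu> s) = q s)"

definition partially_stable ::
  "'i set \<Rightarrow> 's set \<Rightarrow> ('i \<Rightarrow> ('s option \<times> 's option) set) \<Rightarrow> ('s \<Rightarrow> nat)
     \<Rightarrow> ('s \<Rightarrow> ('i \<times> 'i) set) \<Rightarrow> ('s \<Rightarrow> ('i \<times> 'i) set) \<Rightarrow> ('i \<Rightarrow> 's option) \<Rightarrow> bool" where
  "partially_stable I S P q pr C \<mu> \<longleftrightarrow>
     is_matching I S q \<mu> \<and> individually_rational I P \<mu> \<and> non_wasteful I S P q \<mu> \<and>
     (\<forall>i\<in>I. \<forall>j\<in>I. \<forall>s\<in>S.
        \<mu> j = Some s \<longrightarrow> (Some s, \<mu> i) \<in> P i \<longrightarrow> (i, j) \<in> pr s \<longrightarrow> (i, j) \<in> C s)"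

end

theory Submission
  imports Defs
begin

text \<open>An acyclic asymmetric priority on a finite set of students extends to a strict ranking
  (count transitive predecessors, break ties injectively). For strict rankings a stable matching
  exists: take the least fixed point of the Hatfield--Milgrom operator built from the students'
  choice (their best acceptable school) and the schools' choice (their \<open>q s\<close> best-ranked
  applicants); both choices have monotone rejection sets, so the operator is monotone. A matching
  that is stable for a ranking refining \<open>pr s\<close> never lets \<open>i\<close> envy a student \<open>j\<close> with
  \<open>(i, j) \<in> pr s\<close>, so it is partially stable whatever \<open>C\<close> is.\<close>

lemma acyclic_rel_on_imp_acyclic:
  assumes acy: "acyclic_rel_on I B" and asy: "asym B" and sub: "B \<subseteq> I \<times> I"
  shows "acyclic B"
  unfolding acyclic_def
proof (intro allI notI)
  fix x assume "(x, x) \<in> B\<^sup>+"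
  then obtain n f where n: "n > 0" and f: "f 0 = x" "f n = x" "\<forall>k<n. (f k, f (Suc k)) \<in> B"
    by (auto simp: trancl_power relpow_fun_conv)
  have reverse_not_in: "(a, b) \<in> B \<Longrightarrow> (b, a) \<notin> B" for a b using asy by (rule asymD)
  \<comment> \<open>\<open>acyclic_rel_on\<close> only excludes cycles through at least three vertices.\<close>
  consider "n = 1" | "n = 2" | "n \<ge> 3" using n by linarith
  then show False
  proof cases
    case 1
    then show ?thesis using f reverse_not_in[of x x] by auto
  next
    case 2
    then have "(f 0, f 1) \<in> B" "(f 1, f 0) \<in> B" using f by (auto simp: numeral_2_eq_2)
    then show ?thesis using reverse_not_in by blast
  next
    case 3
    define K where "K = n - 1"
    have K: "K \<ge> 2" "Suc K = n" using 3 by (auto simp: K_def)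
    have "\<forall>k\<le>K. f k \<in> I"
    proof (intro allI impI)
      fix k assume "k \<le> K"
      then have "(f k, f (Suc k)) \<in> B" using f(3) K by simp
      then show "f k \<in> I" using sub by blast
    qed
    moreover have "\<forall>k\<in>{1..K}. (f (k - 1), f k) \<in> B \<and> (f k, f (k - 1)) \<notin> B"
    proof
      fix k assume k: "k \<in> {1..K}"
      then have "k - 1 < n" "Suc (k - 1) = k" using K by auto
      then have "(f (k - 1), f k) \<in> B" using f(3) by metis
      then show "(f (k - 1), f k) \<in> B \<and> (f k, f (k - 1)) \<notin> B" using reverse_not_in by blast
    qed
    moreover have "(f K, f 0) \<in> B" using f K by (metis lessI)
    ultimately show ?thesis using acy K(1) unfolding acyclic_rel_on_def by blast
  qed
qed

lemma finite_acyclic_injective_ranking: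
  assumes fin: "finite I" and sub: "B \<subseteq> I \<times> I" and acy: "acyclic B"
  obtains r :: "'a \<Rightarrow> nat" where "inj_on r I" and "\<And>i j. (i, j) \<in> B \<Longrightarrow> r i < r j"
proof -
  obtain g :: "'a \<Rightarrow> nat" and n where g: "g ` I = {..<n}" "inj_on g I"
    using finite_imp_inj_to_nat_seg[OF fin] by (metis lessThan_def)
  define h where "h i = card {k \<in> I. (k, i) \<in> B\<^sup>+}" for i
  \<comment> \<open>Lexicographic in the number of \<open>B\<^sup>+\<close>-predecessors and the injective code \<open>g\<close>.\<close>
  define r where "r i = h i * n + g i" for i
  have g_less: "i \<in> I \<Longrightarrow> g i < n" for i using g by auto
  have "inj_on r I"
  proof (rule inj_onI)
    fix a b assume "a \<in> I" "b \<in> I" "r a = r b"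
    then have "g a = g b" using g_less by (metis r_def mod_mult_self3 mod_less)
    then show "a = b" using g(2) \<open>a \<in> I\<close> \<open>b \<in> I\<close> by (auto dest: inj_onD)
  qed
  moreover have "r i < r j" if ij: "(i, j) \<in> B" for i j
  proof -
    have "i \<in> I" using ij sub by auto
    \<comment> \<open>\<open>i\<close> is a predecessor of \<open>j\<close> but, by acyclicity, not of itself.\<close>
    have "{k \<in> I. (k, i) \<in> B\<^sup>+} \<subset> {k \<in> I. (k, j) \<in> B\<^sup>+}"
      using ij \<open>i \<in> I\<close> acy unfolding acyclic_def by (auto intro: trancl_into_trancl)
    then have "h i < h j" unfolding h_def using fin by (intro psubset_card_mono) auto
    then have "(h i + 1) * n \<le> h j * n" by (intro mult_right_mono) auto
    then show ?thesis using g_less[OF \<open>i \<in> I\<close>] by (auto simp: r_def)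
  qed
  ultimately show ?thesis using that by blast
qed

lemma bij_betw_rank_position:
  fixes r :: "'a \<Rightarrow> 'b::linorder"
  assumes fin: "finite J" and inj: "inj_on r J"
  shows "bij_betw (\<lambda>j. card {k \<in> J. r k < r j}) J {..<card J}"
proof -
  define pos where "pos j = card {k \<in> J. r k < r j}" for j
  have pos_mono: "pos i < pos j" if "i \<in> J" "r i < r j" for i j
  proof -
    have "{k \<in> J. r k < r i} \<subset> {k \<in> J. r k < r j}" using that by auto
    then show ?thesis unfolding pos_def using fin by (intro psubset_card_mono) auto
  qed
  have "inj_on pos J"
  proof (rule inj_onI)
    fix a b assume "a \<in> J" "b \<in> J" "pos a = pos b"
    then show "a = b"
      using pos_mono[of a b] pos_mono[of b a] inj by (metis inj_onD less_irrefl linorder_neqE)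
  qed
  moreover have "pos ` J \<subseteq> {..<card J}"
  proof
    fix x assume "x \<in> pos ` J"
    then obtain j where "j \<in> J" "x = pos j" by auto
    then have "{k \<in> J. r k < r j} \<subset> J" by auto
    then show "x \<in> {..<card J}" using \<open>x = pos j\<close> fin unfolding pos_def
      by (auto intro: psubset_card_mono)
  qed
  ultimately show ?thesis unfolding pos_def[symmetric] bij_betw_def
    by (metis card_image card_lessThan card_subset_eq finite_lessThan)
qed

lemma card_rank_position_less:
  fixes r :: "'a \<Rightarrow> 'b::linorder"
  assumes "finite J" and "inj_on r J"
  shows "card {j \<in> J. card {k \<in> J. r k < r j} < q} = min q (card J)"
proof -
  let ?pos = "\<lambda>j. card {k \<in> J. r k < r j}"
  have bij: "bij_betw ?pos J {..<card J}" using assms by (rule bij_betw_rank_position)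
  then have "bij_betw ?pos {j \<in> J. ?pos j < q} ({..<card J} \<inter> {..<q})"
    by (auto simp: bij_betw_def inj_on_def)
  then have "card {j \<in> J. ?pos j < q} = card ({..<card J} \<inter> {..<q})"
    by (rule bij_betw_same_card)
  also have "{..<card J} \<inter> {..<q} = {..<min q (card J)}" by auto
  finally show ?thesis by simp
qed

lemma substitutable_choice_fixed_point:
  fixes chI chS :: "'a set \<Rightarrow> 'a set"
  assumes chI_subset: "\<And>Y. chI Y \<subseteq> Y" and chS_subset: "\<And>Y. chS Y \<subseteq> Y"
    and chI_rejects_mono: "\<And>Y Y'. Y \<subseteq> Y' \<Longrightarrow> Y - chI Y \<subseteq> Y' - chI Y'"
    and chS_rejects_mono: "\<And>Y Y'. Y \<subseteq> Y' \<Longrightarrow> Y - chS Y \<subseteq> Y' - chS Y'"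
  obtains A B where "A \<union> B = X" and "chI A = A \<inter> B" and "chS B = A \<inter> B"
proof -
  \<comment> \<open>\<open>A\<close> is what the students may still choose from, \<open>G A\<close> what the schools may choose from;
    the least fixed point is the outcome of student-proposing deferred acceptance.\<close>
  define G where "G A = X - (A - chI A)" for A
  define F where "F A = X - (G A - chS (G A))" for A
  have "mono F"
  proof (rule monoI)
    fix A A' :: "'a set" assume "A \<subseteq> A'"
    then have "G A' \<subseteq> G A" unfolding G_def using chI_rejects_mono by blast
    then show "F A \<subseteq> F A'" unfolding F_def using chS_rejects_mono by blast
  qed
  define A where "A = lfp F"
  have A: "A = X - (G A - chS (G A))"
    unfolding A_def using lfp_unfold[OF \<open>mono F\<close>] by (simp add: F_def)
  have B: "G A = X - (A - chI A)" by (simp add: G_def)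
  show ?thesis
  proof
    show "A \<union> G A = X" using A B by blast
    show "chI A = A \<inter> G A" using A B chI_subset[of A] by blast
    show "chS (G A) = A \<inter> G A" using A B chS_subset[of "G A"] by blast
  qed
qed

definition student_choice ::
  "('i \<Rightarrow> ('s option \<times> 's option) set) \<Rightarrow> ('i \<times> 's) set \<Rightarrow> ('i \<times> 's) set" where
  "student_choice P Y = {(i, s) \<in> Y. \<forall>s'. (i, s') \<in> Y \<longrightarrow> s' = s \<or> (Some s, Some s') \<in> P i}"

definition school_choice ::
  "'i set \<Rightarrow> ('s \<Rightarrow> 'i \<Rightarrow> nat) \<Rightarrow> ('s \<Rightarrow> nat) \<Rightarrow> ('i \<times> 's) set \<Rightarrow> ('i \<times> 's) set" where
  "school_choice I r q Y = {(i, s) \<in> Y. card {k \<in> I. (k, s) \<in> Y \<and> r s k < r s i} < q s}"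

lemma student_choice_subset: "student_choice P Y \<subseteq> Y"
  by (auto simp: student_choice_def)

lemma student_rejections_mono:
  "Y \<subseteq> Y' \<Longrightarrow> Y - student_choice P Y \<subseteq> Y' - student_choice P Y'"
  unfolding student_choice_def by blast

lemma student_choice_unique:
  assumes "asym (P i)" and "(i, s) \<in> student_choice P Y" and "(i, s') \<in> student_choice P Y"
  shows "s = s'"
  using assms unfolding student_choice_def by (auto dest: asymD)

lemma student_choice_best:
  assumes order: "strict_linear_order_on (outcomes S) (P i)"
    and fin: "finite S" and sub: "{s. (i, s) \<in> Y} \<subseteq> S" and "(i, s) \<in> Y"
  obtains t where "(i, t) \<in> student_choice P Y" and "t = s \<or> (Some t, Some s) \<in> P i"
proof -
  define Q where "Q = Some ` {s. (i, s) \<in> Y}"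
  have "trans (P i)" "irrefl (P i)" and total: "total_on (outcomes S) (P i)"
    using order by (auto simp: strict_linear_order_on_def)
  then have "acyclic (P i)" by (simp add: acyclic_irrefl)
  then have "acyclic (P i \<inter> Q \<times> Q)" by (rule acyclic_subset) blast
  moreover have "finite Q" unfolding Q_def using fin sub by (meson finite_imageI finite_subset)
  then have "finite (P i \<inter> Q \<times> Q)" by (intro finite_Int disjI2 finite_SigmaI)
  ultimately have "wf (P i \<inter> Q \<times> Q)" by (rule finite_acyclic_wf[rotated])
  moreover have "Some s \<in> Q" unfolding Q_def using \<open>(i, s) \<in> Y\<close> by blast
  ultimately obtain z where "z \<in> Q" and z_min: "\<forall>y. (y, z) \<in> P i \<inter> Q \<times> Q \<longrightarrow> y \<notin> Q"
    unfolding wf_eq_minimal by metis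
  then obtain t where z: "z = Some t" and "(i, t) \<in> Y" unfolding Q_def by blast
  have t_best: "(Some t, Some s') \<in> P i" if "(i, s') \<in> Y" and "s' \<noteq> t" for s'
  proof -
    have "Some s' \<in> Q" using that unfolding Q_def by blast
    then have "(Some s', Some t) \<notin> P i" using z z_min \<open>z \<in> Q\<close> by blast
    moreover have "Some s' \<in> outcomes S" "Some t \<in> outcomes S"
      using that \<open>(i, t) \<in> Y\<close> sub unfolding outcomes_def by auto
    ultimately show ?thesis using total \<open>s' \<noteq> t\<close> unfolding total_on_def by blast
  qed
  then have "(i, t) \<in> student_choice P Y" using \<open>(i, t) \<in> Y\<close> unfolding student_choice_def by blast
  moreover have "t = s \<or> (Some t, Some s) \<in> P i" using t_best \<open>(i, s) \<in> Y\<close> by blast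
  ultimately show ?thesis using that by blast
qed

lemma school_choice_subset: "school_choice I r q Y \<subseteq> Y"
  by (auto simp: school_choice_def)

lemma school_rejections_mono:
  assumes "finite I" and "Y \<subseteq> Y'"
  shows "Y - school_choice I r q Y \<subseteq> Y' - school_choice I r q Y'"
proof
  fix p assume p: "p \<in> Y - school_choice I r q Y"
  obtain i s where [simp]: "p = (i, s)" by (cases p)
  have "card {k \<in> I. (k, s) \<in> Y \<and> r s k < r s i} \<le> card {k \<in> I. (k, s) \<in> Y' \<and> r s k < r s i}"
    using assms by (intro card_mono) auto
  then show "p \<in> Y' - school_choice I r q Y'" using p assms(2) by (auto simp: school_choice_def)
qed

lemma card_school_choice:
  assumes "finite I" and "inj_on (r s) I"
  shows "card {i \<in> I. (i, s) \<in> school_choice I r q Y} = min (q s) (card {i \<in> I. (i, s) \<in> Y})"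
proof -
  define J where "J = {i \<in> I. (i, s) \<in> Y}"
  have below_eq: "{k \<in> J. r s k < r s j} = {k \<in> I. (k, s) \<in> Y \<and> r s k < r s j}" for j
    unfolding J_def by auto
  have "{i \<in> I. (i, s) \<in> school_choice I r q Y} = {j \<in> J. card {k \<in> J. r s k < r s j} < q s}"
    unfolding below_eq unfolding J_def school_choice_def by auto
  also have "card \<dots> = min (q s) (card J)"
    using assms by (intro card_rank_position_less) (auto simp: J_def intro: inj_on_subset)
  finally show ?thesis unfolding J_def .
qed

lemma school_choice_full_if_rejects:
  assumes "finite I" and "inj_on (r s) I" and "(i, s) \<in> Y - school_choice I r q Y"
  shows "card {j \<in> I. (j, s) \<in> school_choice I r q Y} = q s"
proof -
  have "q s \<le> card {k \<in> I. (k, s) \<in> Y \<and> r s k < r s i}"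
    using assms(3) by (auto simp: school_choice_def)
  also have "\<dots> \<le> card {k \<in> I. (k, s) \<in> Y}" using assms(1) by (intro card_mono) auto
  finally show ?thesis using card_school_choice[of I r s q Y, OF assms(1,2)] by simp
qed

lemma school_choice_prefers_higher_rank:
  assumes "finite I" and "inj_on (r s) I" and "i \<in> I" and "j \<in> I"
    and rejected: "(i, s) \<in> Y - school_choice I r q Y" and chosen: "(j, s) \<in> school_choice I r q Y"
  shows "r s j < r s i"
proof (rule ccontr)
  assume "\<not> r s j < r s i"
  moreover have "i \<noteq> j" using rejected chosen by blast
  ultimately have "r s i < r s j" using assms(2-4) by (metis inj_onD linorder_neqE)
  then have "{k \<in> I. (k, s) \<in> Y \<and> r s k < r s i} \<subset> {k \<in> I. (k, s) \<in> Y \<and> r s k < r s j}"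
    using rejected \<open>i \<in> I\<close> by auto
  then have "card {k \<in> I. (k, s) \<in> Y \<and> r s k < r s i} < card {k \<in> I. (k, s) \<in> Y \<and> r s k < r s j}"
    using assms(1) by (intro psubset_card_mono) auto
  then show False using rejected chosen by (auto simp: school_choice_def)
qed

definition matching_of :: "('i \<times> 's) set \<Rightarrow> 'i \<Rightarrow> 's option" where
  "matching_of Z i = (if \<exists>s. (i, s) \<in> Z then Some (THE s. (i, s) \<in> Z) else None)"

lemma matching_of_eq_Some_iff:
  assumes "\<And>s s'. (i, s) \<in> Z \<Longrightarrow> (i, s') \<in> Z \<Longrightarrow> s = s'"
  shows "matching_of Z i = Some s \<longleftrightarrow> (i, s) \<in> Z"
proof
  assume "matching_of Z i = Some s"
  then obtain s0 where "(i, s0) \<in> Z" and "s = (THE s. (i, s) \<in> Z)"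
    unfolding matching_of_def by (auto split: if_splits)
  then show "(i, s) \<in> Z" using assms by (metis theI)
next
  assume "(i, s) \<in> Z"
  then show "matching_of Z i = Some s"
    unfolding matching_of_def using assms by auto
qed

definition acceptable_contracts ::
  "'i set \<Rightarrow> 's set \<Rightarrow> ('i \<Rightarrow> ('s option \<times> 's option) set) \<Rightarrow> ('i \<times> 's) set" where
  "acceptable_contracts I S P = {(i, s). i \<in> I \<and> s \<in> S \<and> (Some s, None) \<in> P i}"

text \<open>Priorities given by ranks: a smaller \<open>r s i\<close> means higher priority at \<open>s\<close>.\<close>

definition rank_stable ::
  "'i set \<Rightarrow> 's set \<Rightarrow> ('i \<Rightarrow> ('s option \<times> 's option) set) \<Rightarrow> ('s \<Rightarrow> nat)
     \<Rightarrow> ('s \<Rightarrow> 'i \<Rightarrow> nat) \<Rightarrow> ('i \<Rightarrow> 's option) \<Rightarrow> bool" where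
  "rank_stable I S P q r \<mu> \<longleftrightarrow>
     is_matching I S q \<mu> \<and> individually_rational I P \<mu> \<and> non_wasteful I S P q \<mu> \<and>
     (\<forall>i\<in>I. \<forall>j\<in>I. \<forall>s\<in>S. \<mu> j = Some s \<longrightarrow> (Some s, \<mu> i) \<in> P i \<longrightarrow> r s j < r s i)"

locale ranked_school_choice =
  fixes I :: "'i set" and S :: "'s set" and P :: "'i \<Rightarrow> ('s option \<times> 's option) set"
    and q :: "'s \<Rightarrow> nat" and r :: "'s \<Rightarrow> 'i \<Rightarrow> nat"
  assumes finite_students: "finite I" and finite_schools: "finite S"
    and strict_preferences: "\<And>i. i \<in> I \<Longrightarrow> strict_linear_order_on (outcomes S) (P i)"
    and injective_ranks: "\<And>s. s \<in> S \<Longrightarrow> inj_on (r s) I"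

locale stable_contract_split = ranked_school_choice +
  fixes A B :: "('i \<times> 's) set"
  assumes union_acceptable: "A \<union> B = acceptable_contracts I S P"
    and student_choice_fixed: "student_choice P A = A \<inter> B"
    and school_choice_fixed: "school_choice I r q B = A \<inter> B"
begin

abbreviation \<mu> :: "'i \<Rightarrow> 's option" where
  "\<mu> \<equiv> matching_of (A \<inter> B)"

lemma matched_acceptable: "(i, s) \<in> A \<inter> B \<Longrightarrow> (i, s) \<in> acceptable_contracts I S P"
  using union_acceptable by blast

lemma \<mu>_eq_Some_iff: "\<mu> i = Some s \<longleftrightarrow> (i, s) \<in> A \<inter> B"
proof (rule matching_of_eq_Some_iff)
  fix s s' assume matched: "(i, s) \<in> A \<inter> B" "(i, s') \<in> A \<inter> B"
  then have "i \<in> I" using matched_acceptable by (auto simp: acceptable_contracts_def)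
  then have "asym (P i)" using strict_preferences
    by (auto simp: strict_linear_order_on_def asym_on_iff_irrefl_on_if_trans_on)
  then show "s = s'" using matched unfolding student_choice_fixed[symmetric]
    by (rule student_choice_unique)
qed

lemma \<mu>_acceptable: "\<mu> i = Some s \<Longrightarrow> (i, s) \<in> acceptable_contracts I S P"
  using \<mu>_eq_Some_iff matched_acceptable by blast

lemma assigned_\<mu>: "assigned I \<mu> s = {i \<in> I. (i, s) \<in> school_choice I r q B}"
  unfolding assigned_def \<mu>_eq_Some_iff school_choice_fixed ..

lemma preferred_contract_rejected:
  assumes "i \<in> I" and "s \<in> S" and preferred: "(Some s, \<mu> i) \<in> P i"
  shows "(i, s) \<in> B - school_choice I r q B"
proof -
  have order: "strict_linear_order_on (outcomes S) (P i)" using strict_preferences \<open>i \<in> I\<close> .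
  then have "trans (P i)" and "irrefl (P i)" by (auto simp: strict_linear_order_on_def)
  have "(Some s, None) \<in> P i"
  proof (cases "\<mu> i")
    case (Some s')
    then have "(Some s', None) \<in> P i" using \<mu>_acceptable by (auto simp: acceptable_contracts_def)
    then show ?thesis using preferred Some \<open>trans (P i)\<close> by (metis transD)
  qed (use preferred in simp)
  then have acceptable: "(i, s) \<in> acceptable_contracts I S P"
    using assms by (auto simp: acceptable_contracts_def)
  have "(i, s) \<notin> A"
  proof
    assume "(i, s) \<in> A"
    moreover have "{s. (i, s) \<in> A} \<subseteq> S" using union_acceptable by (auto simp: acceptable_contracts_def)
    ultimately obtain t where "(i, t) \<in> student_choice P A" and "t = s \<or> (Some t, Some s) \<in> P i"
      using student_choice_best[of S P i A s] order finite_schools by blast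
    moreover from this have "\<mu> i = Some t" using \<mu>_eq_Some_iff student_choice_fixed by blast
    ultimately show False using preferred \<open>trans (P i)\<close> \<open>irrefl (P i)\<close>
      by (metis irrefl_def transD)
  qed
  then show ?thesis using acceptable union_acceptable school_choice_fixed by blast
qed

lemma rank_stable_\<mu>: "rank_stable I S P q r \<mu>"
  unfolding rank_stable_def
proof (intro conjI)
  show "is_matching I S q \<mu>"
    unfolding is_matching_def assigned_\<mu>
  proof (intro conjI ballI)
    show "\<mu> i \<in> outcomes S" for i
      using \<mu>_acceptable by (cases "\<mu> i") (auto simp: outcomes_def acceptable_contracts_def)
    show "card {i \<in> I. (i, s) \<in> school_choice I r q B} \<le> q s" if "s \<in> S" for s
      using card_school_choice[of I r s q B, OF finite_students injective_ranks[OF that]] by simp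
  qed
  show "individually_rational I P \<mu>"
    unfolding individually_rational_def
  proof
    fix i show "(\<mu> i, None) \<in> P i \<or> \<mu> i = None"
      using \<mu>_acceptable by (cases "\<mu> i") (auto simp: acceptable_contracts_def)
  qed
  show "non_wasteful I S P q \<mu>"
    unfolding non_wasteful_def assigned_\<mu>
  proof (intro ballI impI)
    fix i s assume "i \<in> I" "s \<in> S" "(Some s, \<mu> i) \<in> P i"
    then have "(i, s) \<in> B - school_choice I r q B" by (rule preferred_contract_rejected)
    then show "card {j \<in> I. (j, s) \<in> school_choice I r q B} = q s"
      using school_choice_full_if_rejects[where r = r and s = s] finite_students
        injective_ranks[OF \<open>s \<in> S\<close>] by blast
  qed
  show "\<forall>i\<in>I. \<forall>j\<in>I. \<forall>s\<in>S. \<mu> j = Some s \<longrightarrow> (Some s, \<mu> i) \<in> P i \<longrightarrow> r s j < r s i"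
  proof (intro ballI impI)
    fix i j s assume "i \<in> I" "j \<in> I" "s \<in> S" "\<mu> j = Some s" "(Some s, \<mu> i) \<in> P i"
    then have "(i, s) \<in> B - school_choice I r q B" and "(j, s) \<in> school_choice I r q B"
      using preferred_contract_rejected \<mu>_eq_Some_iff school_choice_fixed by auto
    then show "r s j < r s i"
      using school_choice_prefers_higher_rank[where r = r and s = s] finite_students
        injective_ranks[OF \<open>s \<in> S\<close>] \<open>i \<in> I\<close> \<open>j \<in> I\<close> by blast
  qed
qed

end

lemma (in ranked_school_choice) rank_stable_matching_exists: "\<exists>\<mu>. rank_stable I S P q r \<mu>"
proof -
  obtain A B where "A \<union> B = acceptable_contracts I S P"
    and "student_choice P A = A \<inter> B" and "school_choice I r q B = A \<inter> B"
    by (rule substitutable_choice_fixed_point[of "student_choice P" "school_choice I r q"])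
      (simp_all add: student_choice_subset school_choice_subset
        student_rejections_mono school_rejections_mono[OF finite_students])
  then interpret stable_contract_split I S P q r A B by unfold_locales
  show ?thesis using rank_stable_\<mu> by blast
qed

lemma rank_stable_imp_partially_stable:
  assumes "rank_stable I S P q r \<mu>"
    and "\<And>s i j. s \<in> S \<Longrightarrow> (i, j) \<in> pr s \<Longrightarrow> r s i < r s j"
  shows "partially_stable I S P q pr C \<mu>"
  using assms unfolding rank_stable_def partially_stable_def by (blast dest: less_asym)

theorem corollary7:
  fixes I :: "'i set" and S :: "'s set"
    and P :: "'i \<Rightarrow> ('s option \<times> 's option) set"
    and q :: "'s \<Rightarrow> nat"
    and pr :: "'s \<Rightarrow> ('i \<times> 'i) set"
    and C :: "'s \<Rightarrow> ('i \<times> 'i) set"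
  assumes "school_choice_problem I S P q pr"
    and "\<forall>s\<in>S. acyclic_rel_on I (pr s)"
  shows "\<exists>\<mu>. partially_stable I S P q pr C \<mu>"
proof -
  note problem = assms(1)[unfolded school_choice_problem_def]
  have "\<exists>r :: 'i \<Rightarrow> nat. inj_on r I \<and> (\<forall>i j. (i, j) \<in> pr s \<longrightarrow> r i < r j)" if "s \<in> S" for s
  proof -
    have "pr s \<subseteq> I \<times> I" and "asym (pr s)" using problem that by auto
    moreover have "acyclic_rel_on I (pr s)" using assms(2) that ..
    ultimately have "acyclic (pr s)" by (intro acyclic_rel_on_imp_acyclic)
    with \<open>pr s \<subseteq> I \<times> I\<close> obtain r :: "'i \<Rightarrow> nat"
      where "inj_on r I" "\<And>i j. (i, j) \<in> pr s \<Longrightarrow> r i < r j"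
      using problem finite_acyclic_injective_ranking by metis
    then show ?thesis by blast
  qed
  then obtain rk :: "'s \<Rightarrow> 'i \<Rightarrow> nat" where "\<And>s. s \<in> S \<Longrightarrow> inj_on (rk s) I"
    and rk_respects: "\<And>s i j. s \<in> S \<Longrightarrow> (i, j) \<in> pr s \<Longrightarrow> rk s i < rk s j"
    by metis
  then interpret ranked_school_choice I S P q rk using problem by unfold_locales simp_all
  obtain \<mu> where "rank_stable I S P q rk \<mu>" using rank_stable_matching_exists by blast
  then show ?thesis using rank_stable_imp_partially_stable rk_respects by blast
qed

end
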